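(* Let $(P,\leqslant)$ be a conditionally-complete interpolating poset and let $P^* := \{x \in P : \exists\, y \in P,\ y \ll x\}$ with the induced order. Then $P^*$ is a conditionally-complete interpolating subposet of $P$.
   Context: A poset is conditionally-complete if every nonempty subset bounded above has a supremum. A nonempty subset $D$ is directed if any two elements of $D$ have an upper bound in $D$. For a poset $R$ and $x,y \in R$, $x \ll_R y$ means: for every directed subset $D$ of $R$ bounded above in $R$ with supremum $d_0$ in $R$, $y \leqslant d_0$ implies $x \leqslant d$ for some $d \in D$; write $\ll$ for $\ll_P$. A poset $R$ is interpolating if whenever $x \ll_R y$ there is $z \in R$ with $x \ll_R z \ll_R y$. A subset $Q \subseteq P$ with the induced order is a subposet of $P$ if for all $x,y \in Q$: $x \ll_Q y \iff x \ll y$. *)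

theory Defs
  imports Main
begin

text \<open>A poset is modelled as a carrier set R in a type with a partial order,
  carrying the induced order.  All notions are relative to the carrier.\<close>

definition upper_bound_in :: "'a::order set \<Rightarrow> 'a set \<Rightarrow> 'a \<Rightarrow> bool" where
  "upper_bound_in R S u \<longleftrightarrow> u \<in> R \<and> (\<forall>s\<in>S. s \<le> u)"

definition bounded_above_in :: "'a::order set \<Rightarrow> 'a set \<Rightarrow> bool" where
  "bounded_above_in R S \<longleftrightarrow> (\<exists>u. upper_bound_in R S u)"

definition is_sup_in :: "'a::order set \<Rightarrow> 'a set \<Rightarrow> 'a \<Rightarrow> bool" where
  "is_sup_in R S d \<longleftrightarrow> upper_bound_in R S d \<and> (\<forall>u. upper_bound_in R S u \<longrightarrow> d \<le> u)"

definition cond_complete :: "'a::order set \<Rightarrow> bool" where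
  "cond_complete R \<longleftrightarrow>
     (\<forall>S. S \<subseteq> R \<and> S \<noteq> {} \<and> bounded_above_in R S \<longrightarrow> (\<exists>d. is_sup_in R S d))"

definition directed_in :: "'a::order set \<Rightarrow> 'a set \<Rightarrow> bool" where
  "directed_in R D \<longleftrightarrow> D \<noteq> {} \<and> D \<subseteq> R \<and> (\<forall>x\<in>D. \<forall>y\<in>D. \<exists>z\<in>D. x \<le> z \<and> y \<le> z)"

definition way_below_in :: "'a::order set \<Rightarrow> 'a \<Rightarrow> 'a \<Rightarrow> bool" where
  "way_below_in R x y \<longleftrightarrow>
     (\<forall>D d0. directed_in R D \<and> bounded_above_in R D \<and> is_sup_in R D d0 \<and> y \<le> d0
        \<longrightarrow> (\<exists>d\<in>D. x \<le> d))"

definition interpolating :: "'a::order set \<Rightarrow> bool" where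
  "interpolating R \<longleftrightarrow>
     (\<forall>x\<in>R. \<forall>y\<in>R. way_below_in R x y \<longrightarrow> (\<exists>z\<in>R. way_below_in R x z \<and> way_below_in R z y))"

definition subposet :: "'a::order set \<Rightarrow> 'a set \<Rightarrow> bool" where
  "subposet Q P \<longleftrightarrow> Q \<subseteq> P \<and> (\<forall>x\<in>Q. \<forall>y\<in>Q. way_below_in Q x y \<longleftrightarrow> way_below_in P x y)"

definition star_part :: "'a::order set \<Rightarrow> 'a set" where
  "star_part P = {x \<in> P. \<exists>y\<in>P. way_below_in P y x}"

end

theory Submission
  imports Defs
begin

text \<open>Since \<open>\<ll>\<close> is monotone in its right argument, \<open>P\<^sup>*\<close> is an upper set of \<open>P\<close>;
  in an upper set of a conditionally complete poset, suprema of nonempty subsets agree with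
  those in \<open>P\<close>, so \<open>P\<^sup>*\<close> is conditionally complete and \<open>x \<ll>\<^sub>P y\<close> implies \<open>x \<ll>\<^sub>P\<^sub>* y\<close>.
  Conversely, if \<open>y \<in> P\<^sup>*\<close>, say \<open>v \<ll> y\<close>, interpolate \<open>v \<ll> z \<ll> y\<close>: any directed \<open>D\<close> whose
  supremum lies above \<open>y\<close> has an element \<open>d\<^sub>1 \<ge> z\<close>, hence \<open>d\<^sub>1 \<in> P\<^sup>*\<close>, and the tail of \<open>D\<close>
  above \<open>d\<^sub>1\<close> is a directed subset of \<open>P\<^sup>*\<close> with the same supremum; so \<open>x \<ll>\<^sub>P\<^sub>* y\<close> implies
  \<open>x \<ll> y\<close>. Interpolation in \<open>P\<^sup>*\<close> then follows, as every interpolant lies in \<open>P\<^sup>*\<close>.\<close>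

definition upper_set_in :: "'a::order set \<Rightarrow> 'a set \<Rightarrow> bool" where
  "upper_set_in P Q \<longleftrightarrow> Q \<subseteq> P \<and> (\<forall>x\<in>Q. \<forall>y\<in>P. x \<le> y \<longrightarrow> y \<in> Q)"

lemma way_below_in_mono_right: "way_below_in P x y \<Longrightarrow> y \<le> y' \<Longrightarrow> way_below_in P x y'"
  unfolding way_below_in_def by (meson order_trans)

lemma is_sup_in_unique: "is_sup_in R D a \<Longrightarrow> is_sup_in R D b \<Longrightarrow> a = b"
  unfolding is_sup_in_def by (meson order_antisym)

lemma is_sup_in_imp_bounded_above_in: "is_sup_in R D d \<Longrightarrow> bounded_above_in R D"
  unfolding is_sup_in_def bounded_above_in_def by blast

lemma star_part_subset: "star_part P \<subseteq> P"
  by (auto simp: star_part_def)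

lemma upper_set_in_star_part: "upper_set_in P (star_part P)"
  unfolding upper_set_in_def star_part_def using way_below_in_mono_right by blast

lemma is_sup_in_upper_set:
  assumes Q: "upper_set_in P Q" and d: "is_sup_in P D d" and D: "D \<subseteq> Q" "D \<noteq> {}"
  shows "d \<in> Q" and "is_sup_in Q D d"
proof -
  obtain s where "s \<in> D" using D(2) by blast
  moreover have "d \<in> P" "\<forall>a\<in>D. a \<le> d"
    using d by (auto simp: is_sup_in_def upper_bound_in_def)
  ultimately show "d \<in> Q" using Q D(1) unfolding upper_set_in_def by blast
  then show "is_sup_in Q D d"
    using d Q by (auto simp: is_sup_in_def upper_bound_in_def upper_set_in_def)
qed

lemma cond_complete_upper_set:
  assumes P: "cond_complete P" and Q: "upper_set_in P Q"
  shows "cond_complete Q"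
  unfolding cond_complete_def
proof (intro allI impI)
  fix S assume S: "S \<subseteq> Q \<and> S \<noteq> {} \<and> bounded_above_in Q S"
  then have "S \<subseteq> P" "bounded_above_in P S"
    using Q by (auto simp: upper_set_in_def bounded_above_in_def upper_bound_in_def)
  then obtain d where "is_sup_in P S d" using P S unfolding cond_complete_def by blast
  then show "\<exists>d. is_sup_in Q S d" using is_sup_in_upper_set[OF Q] S by blast
qed

lemma way_below_in_upper_set:
  assumes P: "cond_complete P" and Q: "upper_set_in P Q" and xy: "way_below_in P x y"
  shows "way_below_in Q x y"
  unfolding way_below_in_def
proof (intro allI impI)
  fix D d0 assume h: "directed_in Q D \<and> bounded_above_in Q D \<and> is_sup_in Q D d0 \<and> y \<le> d0"
  then have D: "D \<subseteq> Q" "D \<noteq> {}" "D \<subseteq> P" using Q by (auto simp: directed_in_def upper_set_in_def)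
  have "bounded_above_in P D"
    using h Q by (auto simp: upper_set_in_def bounded_above_in_def upper_bound_in_def)
  then obtain d where d: "is_sup_in P D d" using P D unfolding cond_complete_def by blast
  have "d0 = d" using is_sup_in_unique is_sup_in_upper_set(2)[OF Q d D(1,2)] h by metis
  moreover have "directed_in P D" using h D by (auto simp: directed_in_def)
  ultimately show "\<exists>d\<in>D. x \<le> d"
    using xy h d is_sup_in_imp_bounded_above_in unfolding way_below_in_def by blast
qed

lemma directed_in_tail:
  assumes "directed_in P D" "d1 \<in> D"
  shows "directed_in P {d \<in> D. d1 \<le> d}"
  unfolding directed_in_def
proof (intro conjI ballI)
  fix a b assume "a \<in> {d \<in> D. d1 \<le> d}" "b \<in> {d \<in> D. d1 \<le> d}"
  then obtain c where "c \<in> D" "a \<le> c" "b \<le> c" "d1 \<le> a"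
    using assms(1) unfolding directed_in_def by blast
  then show "\<exists>c\<in>{d \<in> D. d1 \<le> d}. a \<le> c \<and> b \<le> c" by (blast intro: order_trans)
qed (use assms in \<open>auto simp: directed_in_def\<close>)

lemma upper_bound_in_tail:
  assumes "directed_in P D" "d1 \<in> D"
  shows "upper_bound_in P {d \<in> D. d1 \<le> d} u \<longleftrightarrow> upper_bound_in P D u"
proof
  assume u: "upper_bound_in P {d \<in> D. d1 \<le> d} u"
  show "upper_bound_in P D u"
    unfolding upper_bound_in_def
  proof (intro conjI ballI)
    show "u \<in> P" using u by (simp add: upper_bound_in_def)
    fix a assume "a \<in> D"
    then obtain c where "c \<in> D" "a \<le> c" "d1 \<le> c" using assms unfolding directed_in_def by blast
    then show "a \<le> u" using u unfolding upper_bound_in_def by (blast intro: order_trans)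
  qed
qed (auto simp: upper_bound_in_def)

lemma is_sup_in_tail:
  assumes "directed_in P D" "d1 \<in> D"
  shows "is_sup_in P {d \<in> D. d1 \<le> d} d0 \<longleftrightarrow> is_sup_in P D d0"
  using upper_bound_in_tail[OF assms] unfolding is_sup_in_def by presburger

lemma directed_meets_star_part:
  assumes ip: "interpolating P" and y: "y \<in> star_part P"
    and D: "directed_in P D" and d0: "is_sup_in P D d0" "y \<le> d0"
  obtains d1 where "d1 \<in> D" "d1 \<in> star_part P"
proof -
  obtain v where v: "v \<in> P" "way_below_in P v y" "y \<in> P" using y unfolding star_part_def by blast
  then obtain z where z: "way_below_in P v z" "way_below_in P z y"
    using ip unfolding interpolating_def by blast
  obtain d1 where d1: "d1 \<in> D" "z \<le> d1"
    using z(2) D d0 is_sup_in_imp_bounded_above_in unfolding way_below_in_def by blast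
  have "way_below_in P v d1" using way_below_in_mono_right[OF z(1) d1(2)] .
  then have "d1 \<in> star_part P" using d1 D v(1) unfolding star_part_def directed_in_def by blast
  then show thesis using that d1 by blast
qed

lemma way_below_in_star_part_imp_way_below_in:
  assumes ip: "interpolating P" and y: "y \<in> star_part P"
    and xy: "way_below_in (star_part P) x y"
  shows "way_below_in P x y"
  unfolding way_below_in_def
proof (intro allI impI)
  fix D d0 assume h: "directed_in P D \<and> bounded_above_in P D \<and> is_sup_in P D d0 \<and> y \<le> d0"
  then obtain d1 where d1: "d1 \<in> D" "d1 \<in> star_part P"
    using directed_meets_star_part[OF ip y] by blast
  define T where "T = {d \<in> D. d1 \<le> d}"
  have TP: "directed_in P T" "is_sup_in P T d0"
    using h directed_in_tail[OF _ d1(1)] is_sup_in_tail[OF _ d1(1)] unfolding T_def by simp_all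
  have "T \<subseteq> star_part P"
  proof
    fix d assume "d \<in> T"
    then have "d \<in> P" "d1 \<le> d" using h unfolding T_def directed_in_def by auto
    then show "d \<in> star_part P" using upper_set_in_star_part d1(2) unfolding upper_set_in_def by blast
  qed
  moreover have "T \<noteq> {}" using d1(1) unfolding T_def by blast
  ultimately have T: "T \<subseteq> star_part P" "T \<noteq> {}" .
  have "is_sup_in (star_part P) T d0"
    using is_sup_in_upper_set(2)[OF upper_set_in_star_part TP(2) T] .
  moreover have "directed_in (star_part P) T" using TP(1) T by (simp add: directed_in_def)
  ultimately obtain d where "d \<in> T" "x \<le> d"
    using xy h is_sup_in_imp_bounded_above_in unfolding way_below_in_def by blast
  then show "\<exists>d\<in>D. x \<le> d" unfolding T_def by blast
qed

lemma subposet_star_part: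
  assumes "cond_complete P" and "interpolating P"
  shows "subposet (star_part P) P"
  unfolding subposet_def
proof (intro conjI ballI)
  fix x y assume "y \<in> star_part P"
  then show "way_below_in (star_part P) x y \<longleftrightarrow> way_below_in P x y"
    using way_below_in_star_part_imp_way_below_in[OF assms(2)]
      way_below_in_upper_set[OF assms(1) upper_set_in_star_part] by blast
qed (rule star_part_subset)

lemma interpolating_star_part:
  assumes "cond_complete P" and ip: "interpolating P"
  shows "interpolating (star_part P)"
  unfolding interpolating_def
proof (intro ballI impI)
  have sub: "subposet (star_part P) P" using subposet_star_part[OF assms] .
  fix x y assume xy: "x \<in> star_part P" "y \<in> star_part P" "way_below_in (star_part P) x y"
  then have "way_below_in P x y" "x \<in> P" "y \<in> P"
    using sub star_part_subset unfolding subposet_def by blast+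
  then obtain z where z: "z \<in> P" "way_below_in P x z" "way_below_in P z y"
    using ip unfolding interpolating_def by blast
  moreover have "z \<in> star_part P" using z \<open>x \<in> P\<close> unfolding star_part_def by blast
  ultimately show "\<exists>z\<in>star_part P. way_below_in (star_part P) x z \<and> way_below_in (star_part P) z y"
    using xy sub unfolding subposet_def by blast
qed

theorem corollary2p5:
  fixes P :: "'a::order set"
  assumes "cond_complete P" and "interpolating P"
  shows "cond_complete (star_part P) \<and> interpolating (star_part P) \<and> subposet (star_part P) P"
  using cond_complete_upper_set[OF assms(1) upper_set_in_star_part]
    interpolating_star_part[OF assms] subposet_star_part[OF assms] by (intro conjI)

end
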